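(* Let $\mathbb{X},\mathbb{Y}$ be real normed spaces, $\epsilon\in[0,1)$, and $T\in\mathbb{B}(\mathbb{X},\mathbb{Y})$ nonzero. Then for any $A\in\mathbb{B}(\mathbb{X},\mathbb{Y})$, $T\perp_B^{\epsilon}A$ if and only if (a) or (b) holds: (a) there exists a sequence $(x_n)$ of unit vectors in $\mathbb{X}$ such that $\|Tx_n\|\to\|T\|$, and $\lim_{n\to\infty}\|Ax_n\|$ exists and is $\le\epsilon\|A\|$; (b) there exist sequences $(x_n),(y_n)$ of unit vectors in $\mathbb{X}$ and sequences $(\epsilon_n),(\delta_n)$ of positive reals such that: (i) $\epsilon_n\to0$, $\delta_n\to0$, $\|Tx_n\|\to\|T\|$, $\|Ty_n\|\to\|T\|$; (ii) for all $n$ and all $\lambda\ge0$, $\|Tx_n+\lambda Ax_n\|^2\ge(1-\epsilon_n^2)\|Tx_n\|^2-2\epsilon\sqrt{1-\epsilon_n^2}\,\|Tx_n\|\|\lambda A\|$; (iii) for all $n$ and all $\lambda\le0$, $\|Ty_n+\lambda Ay_n\|^2\ge(1-\delta_n^2)\|Ty_n\|^2-2\epsilon\sqrt{1-\delta_n^2}\,\|Ty_n\|\|\lambda A\|$.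
   Context: $\mathbb{B}(\mathbb{X},\mathbb{Y})$ is the space of bounded linear operators from $\mathbb{X}$ to $\mathbb{Y}$ with the operator norm. For $\epsilon\in[0,1)$ and $u,v$ in a normed space, $u\perp_B^{\epsilon}v$ means $\|u+\lambda v\|^2\ge\|u\|^2-2\epsilon\|u\|\|\lambda v\|$ for all $\lambda\in\mathbb{R}$. *)

theory Defs
  imports "HOL-Analysis.Analysis"
begin

definition bj_eps_orth :: "real \<Rightarrow> 'a::real_normed_vector \<Rightarrow> 'a \<Rightarrow> bool" where
  "bj_eps_orth \<epsilon> u v \<longleftrightarrow>
     (\<forall>l::real. (norm (u + l *\<^sub>R v))\<^sup>2 \<ge> (norm u)\<^sup>2 - 2 * \<epsilon> * norm u * norm (l *\<^sub>R v))"

end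

theory Submission
  imports Defs
begin

(*
  Passing to the limit along the sequences in (a) or (b) gives orthogonality, because
  norm (T x + l *R A x) <= norm (T + l *R A) for unit vectors x.

  Conversely, either A is asymptotically null along some norming sequence of T, which gives (a),
  or there is r > 0 with norm (A z) >= r whenever norm (T z) > norm T - r. In the second case
  take l_n -> 0 and unit vectors x_n almost attaining norm (T + l_n *R A). Orthogonality bounds
  the secant slope (norm (T x_n) - norm (T x_n + l_n *R A x_n)) / l_n by eps * norm A + o(1).
  Convexity of l |-> norm (T x_n + l *R A x_n) extends this bound from l_n to all l >= l_n,
  small l are handled by the triangle inequality, and for large l the term norm (l *R A x_n) >= l r
  dominates. The result is norm (T x_n + l *R A x_n) >= s_n norm (T x_n) - eps l norm A with
  s_n -> 1, i.e. (ii) with e_n = sqrt (1 - s_n^2); the same argument for -A gives (iii).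
*)

lemma norm_blinfun_apply_unit_le:
  "norm x = 1 \<Longrightarrow> norm (blinfun_apply f x) \<le> norm f"
  using norm_blinfun[of f x] by simp

lemma ex_nonzero_of_blinfun_neq_0:
  fixes T :: "'a::real_normed_vector \<Rightarrow>\<^sub>L 'b::real_normed_vector"
  assumes "T \<noteq> 0"
  shows "\<exists>x::'a. x \<noteq> 0"
proof (rule ccontr)
  assume "\<nexists>x::'a. x \<noteq> 0"
  then have "T = 0"
    by (intro blinfun_eqI) (metis blinfun.zero_right zero_blinfun.rep_eq)
  with assms show False ..
qed

lemma ex_unit_vector_norm_blinfun_gt:
  fixes S :: "'a::real_normed_vector \<Rightarrow>\<^sub>L 'b::real_normed_vector"
  assumes nontrivial: "\<exists>x::'a. x \<noteq> 0" and r: "r < norm S"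
  shows "\<exists>x. norm x = 1 \<and> r < norm (S x)"
proof (rule ccontr)
  assume "\<not> ?thesis"
  then have le_r: "norm (S x) \<le> r" if "norm x = 1" for x
    using that by (auto simp: not_less)
  have scaled: "norm (S x) \<le> r * norm x" for x
  proof (cases "x = 0")
    case False
    have "norm (S (x /\<^sub>R norm x)) \<le> r"
      using False by (intro le_r) simp
    then show ?thesis
      using False by (simp add: blinfun.scaleR_right field_simps)
  qed simp
  obtain x0 :: 'a where "x0 \<noteq> 0"
    using nontrivial by blast
  then have "norm (S (x0 /\<^sub>R norm x0)) \<le> r"
    by (intro le_r) simp
  then have "0 \<le> r"
    using norm_ge_zero[of "S (x0 /\<^sub>R norm x0)"] by linarith
  then have "norm S \<le> r"
    using scaled by (rule norm_blinfun_bound)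
  with r show False by simp
qed

lemma power2_ge_of_ge_diff:
  fixes M N c :: real
  assumes "0 \<le> N" "0 \<le> c" "N - c \<le> M"
  shows "N\<^sup>2 - 2 * N * c \<le> M\<^sup>2"
proof (cases "0 \<le> N - c")
  case True
  then have "(N - c)\<^sup>2 \<le> M\<^sup>2"
    using assms by (intro power_mono) auto
  moreover have "N\<^sup>2 - 2 * N * c \<le> (N - c)\<^sup>2"
    by (simp add: power2_eq_square algebra_simps)
  ultimately show ?thesis by linarith
next
  case False
  then have "N * (N - 2 * c) \<le> 0"
    using assms by (intro mult_nonneg_nonpos) auto
  then have "N\<^sup>2 - 2 * N * c \<le> 0"
    by (simp add: power2_eq_square algebra_simps)
  then show ?thesis
    using zero_le_power2[of M] by linarith
qed

lemma norm_add_scaleR_chord: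
  fixes u v :: "'a::real_normed_vector"
  assumes "0 < l0" "l0 \<le> l"
  shows "l0 * (norm u - norm (u + l *\<^sub>R v)) \<le> l * (norm u - norm (u + l0 *\<^sub>R v))"
proof -
  have "l * norm (u + l0 *\<^sub>R v) = norm (l *\<^sub>R (u + l0 *\<^sub>R v))"
    using assms by simp
  also have "\<dots> = norm ((l - l0) *\<^sub>R u + l0 *\<^sub>R (u + l *\<^sub>R v))"
    by (rule arg_cong[where f = norm]) (simp add: algebra_simps)
  also have "\<dots> \<le> (l - l0) * norm u + l0 * norm (u + l *\<^sub>R v)"
    using assms by (intro order_trans[OF norm_triangle_ineq]) simp
  finally show ?thesis by (simp add: algebra_simps)
qed

lemma norm_add_scaleR_lower_bound:
  fixes u v :: "'a::real_normed_vector"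
  assumes l0: "0 < l0" and l: "0 \<le> l" and \<epsilon>: "0 \<le> \<epsilon>" and a: "norm v \<le> a" and s: "s \<le> 1"
    and small: "l0 * a \<le> (1 - s) * norm u"
    and \<eta>: "0 \<le> \<eta>" and secant: "norm u - norm (u + l0 *\<^sub>R v) \<le> l0 * (\<epsilon> * a + \<eta>)"
    and large: "2 * \<eta> \<le> (1 - s) * \<delta>" "\<delta> \<le> norm v"
  shows "s * norm u - \<epsilon> * l * a \<le> norm (u + l *\<^sub>R v)"
proof -
  define t F where "t = norm u" and "F = norm (u + l *\<^sub>R v)"
  have "0 \<le> a"
    using a norm_ge_zero[of v] by linarith
  then have "0 \<le> \<epsilon> * l * a"
    using \<epsilon> l by simp
  have "0 \<le> (1 - s) * t"
    using s unfolding t_def by simp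
  \<comment> \<open>small l: triangle inequality; medium l: the chord through l0; large l: \<open>norm (l *\<^sub>R v) \<ge> l * \<delta>\<close>\<close>
  consider "l \<le> l0" | "l0 \<le> l" "l * \<eta> \<le> (1 - s) * t" | "(1 - s) * t < l * \<eta>"
    by linarith
  then show ?thesis
  proof cases
    case 1
    have "t - l * a \<le> F"
      using norm_diff_ineq[of u "l *\<^sub>R v"] mult_left_mono[OF a l] l unfolding t_def F_def by simp
    moreover have "l * a \<le> l0 * a"
      using 1 \<open>0 \<le> a\<close> by (rule mult_right_mono)
    ultimately show ?thesis
      using small \<open>0 \<le> \<epsilon> * l * a\<close> unfolding t_def F_def by (simp add: algebra_simps)
  next
    case 2
    have "l0 * (t - F) \<le> l * (t - norm (u + l0 *\<^sub>R v))"
      unfolding t_def F_def using l0 2(1) by (rule norm_add_scaleR_chord)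
    also have "\<dots> \<le> l * (l0 * (\<epsilon> * a + \<eta>))"
      using secant l unfolding t_def by (rule mult_left_mono)
    also have "\<dots> = l0 * (l * (\<epsilon> * a + \<eta>))"
      by (simp only: ac_simps)
    finally have "t - F \<le> l * (\<epsilon> * a + \<eta>)"
      using l0 by simp
    then show ?thesis
      using 2 unfolding t_def F_def by (simp add: algebra_simps)
  next
    case 3
    have "0 < l * \<eta>"
      using 3 \<open>0 \<le> (1 - s) * t\<close> by linarith
    then have "0 < \<eta>"
      using l by (simp add: zero_less_mult_iff)
    then have "0 < 1 - s"
      using large(1) s by (cases "s = 1") auto
    have "(1 - s) * (2 * t) < (1 - s) * (l * \<delta>)"
      using 3 mult_left_mono[OF large(1) l] by (simp add: algebra_simps)
    then have "2 * t < l * \<delta>"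
      using \<open>0 < 1 - s\<close> by simp
    moreover have "l * \<delta> - t \<le> F"
      using norm_diff_ineq[of "l *\<^sub>R v" u] mult_left_mono[OF large(2) l] l
      unfolding t_def F_def by (simp add: add.commute)
    moreover have "s * t \<le> t"
      using \<open>0 \<le> (1 - s) * t\<close> by (simp add: algebra_simps)
    ultimately show ?thesis
      using \<open>0 \<le> \<epsilon> * l * a\<close> unfolding t_def F_def by linarith
  qed
qed

lemma norm_add_scaleR_power2_ge_of_secant:
  fixes u v :: "'a::real_normed_vector"
  assumes N: "0 < N" "N / 2 \<le> norm u" and a: "norm v \<le> a" and r: "0 < r" "r \<le> norm v"
    and lam: "0 < lam" and \<eta>: "0 \<le> \<eta>" and \<epsilon>: "0 \<le> \<epsilon>" and l: "0 \<le> l"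
    and secant: "norm u - norm (u + lam *\<^sub>R v) \<le> lam * (\<epsilon> * a + \<eta>)"
    and s: "0 \<le> s" "1 - s = 2 * lam * a / N + 2 * \<eta> / r + lam"
  shows "s\<^sup>2 * (norm u)\<^sup>2 - 2 * \<epsilon> * s * norm u * (l * a) \<le> (norm (u + l *\<^sub>R v))\<^sup>2"
proof -
  have "0 \<le> a"
    using a norm_ge_zero[of v] by linarith
  have "lam * a = 2 * lam * a / N * (N / 2)"
    using N by simp
  also have "\<dots> \<le> (1 - s) * norm u"
    unfolding s(2) using N lam \<eta> r \<open>0 \<le> a\<close> by (intro mult_mono) simp_all
  finally have small: "lam * a \<le> (1 - s) * norm u" .
  have "2 * \<eta> = 2 * \<eta> / r * r"
    using r by simp
  also have "\<dots> \<le> (1 - s) * r"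
    unfolding s(2) using N lam r \<open>0 \<le> a\<close> by (intro mult_right_mono) simp_all
  finally have large: "2 * \<eta> \<le> (1 - s) * r" .
  have "1 - s > 0"
    unfolding s(2) using N lam \<eta> r \<open>0 \<le> a\<close> by (simp add: add_nonneg_pos)
  then have "s * norm u - \<epsilon> * l * a \<le> norm (u + l *\<^sub>R v)"
    using lam l \<epsilon> a small \<eta> secant large r(2) by (intro norm_add_scaleR_lower_bound) simp_all
  then have "(s * norm u)\<^sup>2 - 2 * (s * norm u) * (\<epsilon> * l * a) \<le> (norm (u + l *\<^sub>R v))\<^sup>2"
    using s(1) \<epsilon> l \<open>0 \<le> a\<close> by (intro power2_ge_of_ge_diff) simp_all
  then show ?thesis
    by (simp add: power_mult_distrib algebra_simps)
qed

lemma bj_eps_orth_uminus: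
  assumes "bj_eps_orth \<epsilon> u v"
  shows "bj_eps_orth \<epsilon> u (- v)"
  unfolding bj_eps_orth_def
proof
  fix l :: real
  show "(norm u)\<^sup>2 - 2 * \<epsilon> * norm u * norm (l *\<^sub>R - v) \<le> (norm (u + l *\<^sub>R - v))\<^sup>2"
    using assms[unfolded bj_eps_orth_def, rule_format, of "- l"] by simp
qed

lemma bj_eps_orth_norm_diff_le:
  fixes u v :: "'a::real_normed_vector"
  assumes orth: "bj_eps_orth \<epsilon> u v" and "u \<noteq> 0" and "0 \<le> l"
  shows "norm u - norm (u + l *\<^sub>R v)
    \<le> 2 * \<epsilon> * norm u * norm v / (norm u + norm (u + l *\<^sub>R v)) * l"
proof -
  have "(norm u)\<^sup>2 - 2 * \<epsilon> * norm u * (l * norm v) \<le> (norm (u + l *\<^sub>R v))\<^sup>2"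
    using orth \<open>0 \<le> l\<close> unfolding bj_eps_orth_def by (metis abs_of_nonneg norm_scaleR)
  then have "(norm u - norm (u + l *\<^sub>R v)) * (norm u + norm (u + l *\<^sub>R v))
      \<le> 2 * \<epsilon> * norm u * norm v * l"
    by (simp add: power2_eq_square algebra_simps)
  moreover have "0 < norm u + norm (u + l *\<^sub>R v)"
    using \<open>u \<noteq> 0\<close> by (simp add: add_pos_nonneg)
  ultimately show ?thesis
    by (simp add: pos_le_divide_eq)
qed

lemma bj_eps_orth_of_norming_seq:
  fixes T A :: "'a::real_normed_vector \<Rightarrow>\<^sub>L 'b::real_normed_vector"
  assumes unit: "\<And>n. norm (x n) = 1" and norming: "(\<lambda>n. norm (T (x n))) \<longlonglongrightarrow> norm T"
    and A: "(\<lambda>n. norm (A (x n))) \<longlonglongrightarrow> L" and L: "L \<le> \<epsilon> * norm A" and \<epsilon>: "0 \<le> \<epsilon>"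
  shows "bj_eps_orth \<epsilon> T A"
  unfolding bj_eps_orth_def
proof
  fix l :: real
  have "norm (T (x n)) - \<bar>l\<bar> * norm (A (x n)) \<le> norm (T + l *\<^sub>R A)" for n
    using norm_diff_ineq[of "T (x n)" "l *\<^sub>R A (x n)"]
      norm_blinfun_apply_unit_le[OF unit, of "T + l *\<^sub>R A" n]
    by (simp add: blinfun.add_left blinfun.scaleR_left)
  moreover have "(\<lambda>n. norm (T (x n)) - \<bar>l\<bar> * norm (A (x n))) \<longlonglongrightarrow> norm T - \<bar>l\<bar> * L"
    by (intro tendsto_intros norming A)
  ultimately have "norm T - \<bar>l\<bar> * L \<le> norm (T + l *\<^sub>R A)"
    by (simp add: LIMSEQ_le_const2)
  moreover have "\<bar>l\<bar> * L \<le> \<epsilon> * norm (l *\<^sub>R A)"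
    using mult_left_mono[OF L abs_ge_zero[of l]] by (simp add: mult_ac)
  ultimately have "norm T - \<epsilon> * norm (l *\<^sub>R A) \<le> norm (T + l *\<^sub>R A)"
    by linarith
  then show "(norm T)\<^sup>2 - 2 * \<epsilon> * norm T * norm (l *\<^sub>R A) \<le> (norm (T + l *\<^sub>R A))\<^sup>2"
    using power2_ge_of_ge_diff[of "norm T" "\<epsilon> * norm (l *\<^sub>R A)"] \<epsilon> by (simp add: mult_ac)
qed

lemma norming_seq_null_or_bounded_below:
  fixes T A :: "'a::real_normed_vector \<Rightarrow>\<^sub>L 'b::real_normed_vector"
  shows "(\<exists>x. (\<forall>n. norm (x n) = 1) \<and> (\<lambda>n. norm (T (x n))) \<longlonglongrightarrow> norm T \<and>
            (\<lambda>n. norm (A (x n))) \<longlonglongrightarrow> 0) \<or>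
         (\<exists>r>0. \<forall>z. norm z = 1 \<longrightarrow> norm T - r < norm (T z) \<longrightarrow> r \<le> norm (A z))"
proof (rule disjCI)
  assume "\<not> (\<exists>r>0. \<forall>z. norm z = 1 \<longrightarrow> norm T - r < norm (T z) \<longrightarrow> r \<le> norm (A z))"
  then have "\<exists>z. norm z = 1 \<and> norm T - inverse (real (Suc n)) < norm (T z) \<and>
      norm (A z) < inverse (real (Suc n))" for n
    by (metis not_le inverse_positive_iff_positive of_nat_0_less_iff zero_less_Suc)
  then obtain x where unit: "\<And>n. norm (x n) = 1"
    and T: "\<And>n. norm T - inverse (real (Suc n)) < norm (T (x n))"
    and A: "\<And>n. norm (A (x n)) < inverse (real (Suc n))"
    by metis
  have lim: "(\<lambda>n. inverse (real (Suc n))) \<longlonglongrightarrow> 0"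
    by (rule LIMSEQ_inverse_real_of_nat)
  have "(\<lambda>n. norm (T (x n))) \<longlonglongrightarrow> norm T"
  proof (rule tendsto_sandwich[of "\<lambda>n. norm T - inverse (real (Suc n))" _ _ "\<lambda>_. norm T"])
    show "(\<lambda>n. norm T - inverse (real (Suc n))) \<longlonglongrightarrow> norm T"
      using tendsto_diff[OF tendsto_const lim, of "norm T"] by simp
    show "\<forall>\<^sub>F n in sequentially. norm T - inverse (real (Suc n)) \<le> norm (T (x n))"
      by (intro always_eventually allI less_imp_le T)
    show "\<forall>\<^sub>F n in sequentially. norm (T (x n)) \<le> norm T"
      by (intro always_eventually allI norm_blinfun_apply_unit_le unit)
  qed simp
  moreover have "(\<lambda>n. norm (A (x n))) \<longlonglongrightarrow> 0"
    by (rule tendsto_sandwich[of "\<lambda>_. 0" _ _ "\<lambda>n. inverse (real (Suc n))"])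
      (use A lim in \<open>simp_all add: less_imp_le\<close>)
  ultimately show "\<exists>x. (\<forall>n. norm (x n) = 1) \<and> (\<lambda>n. norm (T (x n))) \<longlonglongrightarrow> norm T \<and>
      (\<lambda>n. norm (A (x n))) \<longlonglongrightarrow> 0"
    using unit by blast
qed

lemma norming_seq_of_perturbation:
  fixes T A :: "'a::real_normed_vector \<Rightarrow>\<^sub>L 'b::real_normed_vector"
  assumes unit: "\<And>n. norm (x n) = 1" and lam: "lam \<longlonglongrightarrow> 0"
    and near: "\<And>n. norm (T + lam n *\<^sub>R A) - (lam n)\<^sup>2 \<le> norm (T (x n) + lam n *\<^sub>R A (x n))"
  shows "(\<lambda>n. norm (T (x n))) \<longlonglongrightarrow> norm T"
proof (rule tendsto_sandwich[of "\<lambda>n. norm (T + lam n *\<^sub>R A) - (lam n)\<^sup>2 - \<bar>lam n\<bar> * norm A"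
      _ _ "\<lambda>_. norm T"])
  show "\<forall>\<^sub>F n in sequentially. norm (T + lam n *\<^sub>R A) - (lam n)\<^sup>2 - \<bar>lam n\<bar> * norm A \<le> norm (T (x n))"
  proof (rule always_eventually, intro allI)
    fix n
    have "norm (T (x n) + lam n *\<^sub>R A (x n)) \<le> norm (T (x n)) + \<bar>lam n\<bar> * norm (A (x n))"
      using norm_triangle_ineq[of "T (x n)" "lam n *\<^sub>R A (x n)"] by simp
    moreover have "\<bar>lam n\<bar> * norm (A (x n)) \<le> \<bar>lam n\<bar> * norm A"
      by (intro mult_left_mono norm_blinfun_apply_unit_le unit) simp
    ultimately show "norm (T + lam n *\<^sub>R A) - (lam n)\<^sup>2 - \<bar>lam n\<bar> * norm A \<le> norm (T (x n))"
      using near[of n] by linarith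
  qed
  have "(\<lambda>n. norm (T + lam n *\<^sub>R A) - (lam n)\<^sup>2 - \<bar>lam n\<bar> * norm A)
      \<longlonglongrightarrow> norm (T + 0 *\<^sub>R A) - 0\<^sup>2 - \<bar>0\<bar> * norm A"
    by (intro tendsto_intros lam)
  then show "(\<lambda>n. norm (T + lam n *\<^sub>R A) - (lam n)\<^sup>2 - \<bar>lam n\<bar> * norm A) \<longlonglongrightarrow> norm T"
    by simp
  show "\<forall>\<^sub>F n in sequentially. norm (T (x n)) \<le> norm T"
    by (intro always_eventually allI norm_blinfun_apply_unit_le unit)
qed simp

text \<open>Condition (ii) of the theorem; condition (iii) is condition (ii) for \<open>-A\<close>,
  see \<open>approx_bj_orth_seq_uminus\<close>.\<close>
definition approx_bj_orth_seq ::
    "real \<Rightarrow> ('a::real_normed_vector \<Rightarrow>\<^sub>L 'b::real_normed_vector) \<Rightarrow> ('a \<Rightarrow>\<^sub>L 'b) \<Rightarrow>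
      (nat \<Rightarrow> 'a) \<Rightarrow> (nat \<Rightarrow> real) \<Rightarrow> bool" where
  "approx_bj_orth_seq \<epsilon> T A x e \<longleftrightarrow>
    (\<forall>n. norm (x n) = 1) \<and> (\<forall>n. 0 < e n) \<and> e \<longlonglongrightarrow> 0 \<and>
    (\<lambda>n. norm (blinfun_apply T (x n))) \<longlonglongrightarrow> norm T \<and>
    (\<forall>n. \<forall>l::real. l \<ge> 0 \<longrightarrow>
       (norm (blinfun_apply T (x n) + l *\<^sub>R blinfun_apply A (x n)))\<^sup>2
         \<ge> (1 - (e n)\<^sup>2) * (norm (blinfun_apply T (x n)))\<^sup>2
            - 2 * \<epsilon> * sqrt (1 - (e n)\<^sup>2) * norm (blinfun_apply T (x n)) * norm (l *\<^sub>R A))"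

lemma approx_bj_orth_seq_uminus:
  fixes T A :: "'a::real_normed_vector \<Rightarrow>\<^sub>L 'b::real_normed_vector"
  shows "approx_bj_orth_seq \<epsilon> T (- A) y d \<longleftrightarrow>
    (\<forall>n. norm (y n) = 1) \<and> (\<forall>n. 0 < d n) \<and> d \<longlonglongrightarrow> 0 \<and>
    (\<lambda>n. norm (blinfun_apply T (y n))) \<longlonglongrightarrow> norm T \<and>
    (\<forall>n. \<forall>l::real. l \<le> 0 \<longrightarrow>
       (norm (blinfun_apply T (y n) + l *\<^sub>R blinfun_apply A (y n)))\<^sup>2
         \<ge> (1 - (d n)\<^sup>2) * (norm (blinfun_apply T (y n)))\<^sup>2
            - 2 * \<epsilon> * sqrt (1 - (d n)\<^sup>2) * norm (blinfun_apply T (y n)) * norm (l *\<^sub>R A))"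
  unfolding approx_bj_orth_seq_def uminus_blinfun.rep_eq
  by (smt (verit) minus_minus norm_minus_cancel scaleR_minus_left scaleR_minus_right)

lemma approx_bj_orth_seq_imp_ineq:
  fixes T A :: "'a::real_normed_vector \<Rightarrow>\<^sub>L 'b::real_normed_vector"
  assumes approx: "approx_bj_orth_seq \<epsilon> T A x e" and l: "0 \<le> l"
  shows "(norm T)\<^sup>2 - 2 * \<epsilon> * norm T * norm (l *\<^sub>R A) \<le> (norm (T + l *\<^sub>R A))\<^sup>2"
proof -
  have unit: "\<And>n. norm (x n) = 1" and "e \<longlonglongrightarrow> 0" and norming: "(\<lambda>n. norm (T (x n))) \<longlonglongrightarrow> norm T"
    using approx unfolding approx_bj_orth_seq_def by simp_all
  have "(\<lambda>n. (1 - (e n)\<^sup>2) * (norm (T (x n)))\<^sup>2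
      - 2 * \<epsilon> * sqrt (1 - (e n)\<^sup>2) * norm (T (x n)) * norm (l *\<^sub>R A))
    \<longlonglongrightarrow> (1 - 0\<^sup>2) * (norm T)\<^sup>2 - 2 * \<epsilon> * sqrt (1 - 0\<^sup>2) * norm T * norm (l *\<^sub>R A)"
    by (intro tendsto_intros \<open>e \<longlonglongrightarrow> 0\<close> norming)
  moreover have "(1 - (e n)\<^sup>2) * (norm (T (x n)))\<^sup>2
      - 2 * \<epsilon> * sqrt (1 - (e n)\<^sup>2) * norm (T (x n)) * norm (l *\<^sub>R A) \<le> (norm (T + l *\<^sub>R A))\<^sup>2" for n
  proof -
    have "norm (T (x n) + l *\<^sub>R A (x n)) \<le> norm (T + l *\<^sub>R A)"
      using norm_blinfun_apply_unit_le[OF unit, of "T + l *\<^sub>R A" n]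
      by (simp add: blinfun.add_left blinfun.scaleR_left)
    then show ?thesis
      using approx l unfolding approx_bj_orth_seq_def
      by (meson norm_ge_zero order_trans power_mono)
  qed
  ultimately show ?thesis
    by (simp add: LIMSEQ_le_const2)
qed

lemma bj_eps_orth_of_approx_bj_orth_seq:
  fixes T A :: "'a::real_normed_vector \<Rightarrow>\<^sub>L 'b::real_normed_vector"
  assumes "approx_bj_orth_seq \<epsilon> T A x e" and "approx_bj_orth_seq \<epsilon> T (- A) y d"
  shows "bj_eps_orth \<epsilon> T A"
  unfolding bj_eps_orth_def
proof
  fix l :: real
  show "(norm T)\<^sup>2 - 2 * \<epsilon> * norm T * norm (l *\<^sub>R A) \<le> (norm (T + l *\<^sub>R A))\<^sup>2"
  proof (cases "0 \<le> l")
    case True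
    then show ?thesis by (rule approx_bj_orth_seq_imp_ineq[OF assms(1)])
  next
    case False
    then show ?thesis
      using approx_bj_orth_seq_imp_ineq[OF assms(2), of "- l"] by simp
  qed
qed

lemma norming_seq_secant_bound:
  fixes T A :: "'a::real_normed_vector \<Rightarrow>\<^sub>L 'b::real_normed_vector"
  assumes "T \<noteq> 0" and orth: "bj_eps_orth \<epsilon> T A"
    and lam: "\<And>n. 0 < lam n" "lam \<longlonglongrightarrow> 0"
  shows "\<exists>x \<eta>. (\<forall>n. norm (x n) = 1) \<and> (\<lambda>n. norm (T (x n))) \<longlonglongrightarrow> norm T \<and>
    (\<forall>n. 0 \<le> \<eta> n) \<and> \<eta> \<longlonglongrightarrow> 0 \<and>
    (\<forall>n. norm (T (x n)) - norm (T (x n) + lam n *\<^sub>R A (x n)) \<le> lam n * (\<epsilon> * norm A + \<eta> n))"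
proof -
  define N a M where "N = norm T" and "a = norm A" and "M n = norm (T + lam n *\<^sub>R A)" for n
  \<comment> \<open>the excess of the secant slope over \<open>\<epsilon> * a\<close> allowed by \<open>bj_eps_orth_norm_diff_le\<close>\<close>
  define \<eta> where "\<eta> n = max 0 (2 * \<epsilon> * N * a / (N + M n) - \<epsilon> * a + lam n)" for n
  have "0 < N"
    using \<open>T \<noteq> 0\<close> unfolding N_def by simp
  have "\<exists>z. norm z = 1 \<and> M n - (lam n)\<^sup>2 < norm ((T + lam n *\<^sub>R A) z)" for n
    using lam(1)[of n] ex_nonzero_of_blinfun_neq_0[OF \<open>T \<noteq> 0\<close>] unfolding M_def
    by (intro ex_unit_vector_norm_blinfun_gt) simp_all
  then obtain x where unit: "\<And>n. norm (x n) = 1"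
    and near: "\<And>n. M n - (lam n)\<^sup>2 < norm (T (x n) + lam n *\<^sub>R A (x n))"
    by (metis plus_blinfun.rep_eq scaleR_blinfun.rep_eq)
  have "(\<lambda>n. norm (T (x n))) \<longlonglongrightarrow> N"
    using unit lam(2) less_imp_le[OF near] unfolding M_def N_def
    by (rule norming_seq_of_perturbation)
  moreover have "M \<longlonglongrightarrow> norm (T + 0 *\<^sub>R A)"
    unfolding M_def by (intro tendsto_intros lam(2))
  then have "\<eta> \<longlonglongrightarrow> max 0 (2 * \<epsilon> * N * a / (N + N) - \<epsilon> * a + 0)"
    unfolding \<eta>_def using \<open>0 < N\<close> by (intro tendsto_intros lam(2)) (auto simp: N_def)
  moreover have "norm (T (x n)) - norm (T (x n) + lam n *\<^sub>R A (x n)) \<le> lam n * (\<epsilon> * a + \<eta> n)" for n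
  proof -
    have "N - M n \<le> 2 * \<epsilon> * N * a / (N + M n) * lam n"
      unfolding N_def a_def M_def using orth \<open>T \<noteq> 0\<close> less_imp_le[OF lam(1)]
      by (rule bj_eps_orth_norm_diff_le)
    moreover have "norm (T (x n)) \<le> N"
      unfolding N_def using unit by (rule norm_blinfun_apply_unit_le)
    ultimately have "norm (T (x n)) - norm (T (x n) + lam n *\<^sub>R A (x n))
        \<le> lam n * (\<epsilon> * a + (2 * \<epsilon> * N * a / (N + M n) - \<epsilon> * a + lam n))"
      using near[of n] by (simp add: power2_eq_square algebra_simps)
    also have "\<dots> \<le> lam n * (\<epsilon> * a + \<eta> n)"
      using lam(1)[of n] unfolding \<eta>_def by (intro mult_left_mono) auto
    finally show ?thesis .
  qed
  moreover have "0 \<le> \<eta> n" for n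
    unfolding \<eta>_def by simp
  ultimately show ?thesis
    using unit \<open>0 < N\<close> unfolding N_def a_def by (intro exI[of _ x] exI[of _ \<eta>]) simp
qed

lemma approx_bj_orth_seq_of_cos_seq:
  fixes T A :: "'a::real_normed_vector \<Rightarrow>\<^sub>L 'b::real_normed_vector"
  assumes unit: "\<And>n. norm (x n) = 1" and norming: "(\<lambda>n. norm (T (x n))) \<longlonglongrightarrow> norm T"
    and s: "\<And>n. 0 \<le> s n" "\<And>n. s n < 1" "s \<longlonglongrightarrow> 1"
    and ineq: "\<And>n l. 0 \<le> l \<Longrightarrow> (s n)\<^sup>2 * (norm (T (x n)))\<^sup>2 - 2 * \<epsilon> * s n * norm (T (x n)) * (l * norm A)
      \<le> (norm (T (x n) + l *\<^sub>R A (x n)))\<^sup>2"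
  shows "approx_bj_orth_seq \<epsilon> T A x (\<lambda>n. sqrt (1 - (s n)\<^sup>2))"
proof -
  have "(\<lambda>n. sqrt (1 - (s n)\<^sup>2)) \<longlonglongrightarrow> sqrt (1 - 1\<^sup>2)"
    by (intro tendsto_intros s(3))
  moreover have "0 < sqrt (1 - (s n)\<^sup>2)" for n
    using s(1,2)[of n] by (simp add: abs_square_less_1)
  moreover have "1 - (sqrt (1 - (s n)\<^sup>2))\<^sup>2 = (s n)\<^sup>2" for n
    using s(1,2)[of n] by (simp add: abs_square_le_1)
  ultimately show ?thesis
    using unit norming ineq s(1) unfolding approx_bj_orth_seq_def by simp
qed

lemma approx_bj_orth_seq_of_secant_bound:
  fixes T A :: "'a::real_normed_vector \<Rightarrow>\<^sub>L 'b::real_normed_vector"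
  assumes unit: "\<And>n. norm (x n) = 1" and norming: "(\<lambda>n. norm (T (x n))) \<longlonglongrightarrow> norm T"
    and T: "T \<noteq> 0" and \<epsilon>: "0 \<le> \<epsilon>"
    and lam: "\<And>n. 0 < lam n" "lam \<longlonglongrightarrow> 0" and \<eta>: "\<And>n. 0 \<le> \<eta> n" "\<eta> \<longlonglongrightarrow> 0"
    and secant: "\<And>n. norm (T (x n)) - norm (T (x n) + lam n *\<^sub>R A (x n))
      \<le> lam n * (\<epsilon> * norm A + \<eta> n)"
    and r: "0 < r" and below: "\<And>z. norm z = 1 \<Longrightarrow> norm T - r < norm (T z) \<Longrightarrow> r \<le> norm (A z)"
  shows "\<exists>e. approx_bj_orth_seq \<epsilon> T A x e"
proof -
  define N a where "N = norm T" and "a = norm A"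
  define P where "P n \<longleftrightarrow> max (N - r) (N / 2) < norm (T (x n))" for n
  define K where "K n = 2 * lam n * a / N + 2 * \<eta> n / r + lam n" for n
  \<comment> \<open>where \<open>norm_add_scaleR_power2_ge_of_secant\<close> does not apply, \<open>s n = 0\<close> makes the bound trivial\<close>
  define s where "s n = (if P n then max 0 (1 - K n) else 0)" for n
  have "0 < N" "0 \<le> a"
    using T unfolding N_def a_def by simp_all
  have "0 < K n" for n
    using lam(1)[of n] \<eta>(1)[of n] \<open>0 < N\<close> \<open>0 \<le> a\<close> r unfolding K_def by (simp add: add_nonneg_pos)
  then have s: "0 \<le> s n" "s n < 1" for n
    unfolding s_def by auto
  have "eventually P sequentially"
    using norming \<open>0 < N\<close> r unfolding P_def N_def by (intro order_tendstoD(1)) auto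
  then have "eventually (\<lambda>n. max 0 (1 - K n) = s n) sequentially"
    by (rule eventually_mono) (simp add: s_def)
  moreover have "(\<lambda>n. max 0 (1 - K n)) \<longlonglongrightarrow> max 0 (1 - (2 * 0 * a / N + 2 * 0 / r + 0))"
    unfolding K_def by (intro tendsto_intros lam(2) \<eta>(2)) (use \<open>0 < N\<close> r in auto)
  ultimately have "s \<longlonglongrightarrow> 1"
    by (simp add: Lim_transform_eventually)
  moreover have "(s n)\<^sup>2 * (norm (T (x n)))\<^sup>2 - 2 * \<epsilon> * s n * norm (T (x n)) * (l * norm A)
      \<le> (norm (T (x n) + l *\<^sub>R A (x n)))\<^sup>2" if "0 \<le> l" for n l
  proof (cases "s n = 0")
    case False
    then have "P n" and "1 - s n = K n"
      unfolding s_def by (auto split: if_splits)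
    then show ?thesis
      using \<open>0 < N\<close> norm_blinfun_apply_unit_le[OF unit] r below[OF unit] lam(1) \<eta>(1) \<epsilon> that
        secant s(1) unfolding P_def K_def N_def a_def
      by (intro norm_add_scaleR_power2_ge_of_secant) auto
  qed simp
  ultimately have "approx_bj_orth_seq \<epsilon> T A x (\<lambda>n. sqrt (1 - (s n)\<^sup>2))"
    using s by (intro approx_bj_orth_seq_of_cos_seq[OF unit norming]) simp_all
  then show ?thesis
    by blast
qed

lemma ex_approx_bj_orth_seq:
  fixes T A :: "'a::real_normed_vector \<Rightarrow>\<^sub>L 'b::real_normed_vector"
  assumes T: "T \<noteq> 0" and \<epsilon>: "0 \<le> \<epsilon>"
    and orth: "bj_eps_orth \<epsilon> T A"
    and r: "0 < r" and below: "\<forall>z. norm z = 1 \<longrightarrow> norm T - r < norm (T z) \<longrightarrow> r \<le> norm (A z)"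
  shows "\<exists>x e. approx_bj_orth_seq \<epsilon> T A x e"
proof -
  define lam where "lam n = inverse (real (Suc n))" for n
  have lam: "\<And>n. 0 < lam n" "lam \<longlonglongrightarrow> 0"
    unfolding lam_def by simp (rule LIMSEQ_inverse_real_of_nat)
  obtain x \<eta> where "\<And>n. norm (x n) = 1" "(\<lambda>n. norm (T (x n))) \<longlonglongrightarrow> norm T"
    "\<And>n. 0 \<le> \<eta> n" "\<eta> \<longlonglongrightarrow> 0"
    "\<And>n. norm (T (x n)) - norm (T (x n) + lam n *\<^sub>R A (x n)) \<le> lam n * (\<epsilon> * norm A + \<eta> n)"
    using norming_seq_secant_bound[OF T orth lam] by blast
  from approx_bj_orth_seq_of_secant_bound[OF this(1,2) T \<epsilon> lam this(3,4,5) r below[rule_format]]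
  show ?thesis by blast
qed

lemma bj_eps_orth_imp_null_or_approx:
  fixes T A :: "'a::real_normed_vector \<Rightarrow>\<^sub>L 'b::real_normed_vector"
  assumes T: "T \<noteq> 0" and \<epsilon>: "0 \<le> \<epsilon>" and orth: "bj_eps_orth \<epsilon> T A"
  shows "(\<exists>x. (\<forall>n. norm (x n) = 1) \<and> (\<lambda>n. norm (T (x n))) \<longlonglongrightarrow> norm T \<and>
            (\<lambda>n. norm (A (x n))) \<longlonglongrightarrow> 0) \<or>
         (\<exists>x e. approx_bj_orth_seq \<epsilon> T A x e) \<and> (\<exists>y d. approx_bj_orth_seq \<epsilon> T (- A) y d)"
  using norming_seq_null_or_bounded_below[of T A]
proof (elim disjE exE conjE)
  fix r assume r: "0 < r" and below: "\<forall>z. norm z = 1 \<longrightarrow> norm T - r < norm (T z) \<longrightarrow> r \<le> norm (A z)"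
  have "\<exists>x e. approx_bj_orth_seq \<epsilon> T A x e"
    using T \<epsilon> orth r below by (rule ex_approx_bj_orth_seq)
  moreover have "\<exists>y d. approx_bj_orth_seq \<epsilon> T (- A) y d"
    using T \<epsilon> bj_eps_orth_uminus[OF orth] r below
    by (intro ex_approx_bj_orth_seq) (simp_all add: uminus_blinfun.rep_eq)
  ultimately show ?thesis
    by blast
qed blast

theorem mainTheorem8:
  fixes T A :: "'a::real_normed_vector \<Rightarrow>\<^sub>L 'b::real_normed_vector"
    and \<epsilon> :: real
  assumes "0 \<le> \<epsilon>" and "\<epsilon> < 1" and "T \<noteq> 0"
  shows "bj_eps_orth \<epsilon> T A \<longleftrightarrow>
    ((\<exists>x :: nat \<Rightarrow> 'a.
        (\<forall>n. norm (x n) = 1) \<and>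
        (\<lambda>n. norm (blinfun_apply T (x n))) \<longlonglongrightarrow> norm T \<and>
        convergent (\<lambda>n. norm (blinfun_apply A (x n))) \<and>
        lim (\<lambda>n. norm (blinfun_apply A (x n))) \<le> \<epsilon> * norm A)
     \<or>
     (\<exists>(x :: nat \<Rightarrow> 'a) (y :: nat \<Rightarrow> 'a) (e :: nat \<Rightarrow> real) (d :: nat \<Rightarrow> real).
        (\<forall>n. norm (x n) = 1) \<and> (\<forall>n. norm (y n) = 1) \<and>
        (\<forall>n. 0 < e n) \<and> (\<forall>n. 0 < d n) \<and>
        e \<longlonglongrightarrow> 0 \<and> d \<longlonglongrightarrow> 0 \<and>
        (\<lambda>n. norm (blinfun_apply T (x n))) \<longlonglongrightarrow> norm T \<and>
        (\<lambda>n. norm (blinfun_apply T (y n))) \<longlonglongrightarrow> norm T \<and>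
        (\<forall>n. \<forall>l::real. l \<ge> 0 \<longrightarrow>
           (norm (blinfun_apply T (x n) + l *\<^sub>R blinfun_apply A (x n)))\<^sup>2
             \<ge> (1 - (e n)\<^sup>2) * (norm (blinfun_apply T (x n)))\<^sup>2
                - 2 * \<epsilon> * sqrt (1 - (e n)\<^sup>2) * norm (blinfun_apply T (x n)) * norm (l *\<^sub>R A)) \<and>
        (\<forall>n. \<forall>l::real. l \<le> 0 \<longrightarrow>
           (norm (blinfun_apply T (y n) + l *\<^sub>R blinfun_apply A (y n)))\<^sup>2
             \<ge> (1 - (d n)\<^sup>2) * (norm (blinfun_apply T (y n)))\<^sup>2
                - 2 * \<epsilon> * sqrt (1 - (d n)\<^sup>2) * norm (blinfun_apply T (y n)) * norm (l *\<^sub>R A))))"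
    (is "_ \<longleftrightarrow> ?a \<or> ?b")
proof -
  have b_iff: "?b \<longleftrightarrow>
      (\<exists>x e. approx_bj_orth_seq \<epsilon> T A x e) \<and> (\<exists>y d. approx_bj_orth_seq \<epsilon> T (- A) y d)"
    unfolding approx_bj_orth_seq_uminus unfolding approx_bj_orth_seq_def by blast
  show ?thesis
  proof
    assume "bj_eps_orth \<epsilon> T A"
    with \<open>T \<noteq> 0\<close> \<open>0 \<le> \<epsilon>\<close> show "?a \<or> ?b"
    proof (elim bj_eps_orth_imp_null_or_approx[THEN disjE] exE conjE)
      fix x assume "\<forall>n. norm (x n) = 1" "(\<lambda>n. norm (T (x n))) \<longlonglongrightarrow> norm T"
        "(\<lambda>n. norm (A (x n))) \<longlonglongrightarrow> 0"
      then show ?thesis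
        using \<open>0 \<le> \<epsilon>\<close> by (intro disjI1 exI[of _ x]) (simp add: convergentI limI)
    next
      fix x e y d assume "approx_bj_orth_seq \<epsilon> T A x e" "approx_bj_orth_seq \<epsilon> T (- A) y d"
      then show ?thesis
        by (intro disjI2 b_iff[THEN iffD2] conjI exI)
    qed
  next
    assume "?a \<or> ?b"
    then show "bj_eps_orth \<epsilon> T A"
    proof
      assume ?a
      then obtain x where "\<forall>n. norm (x n) = 1" "(\<lambda>n. norm (T (x n))) \<longlonglongrightarrow> norm T"
        "convergent (\<lambda>n. norm (A (x n)))" "lim (\<lambda>n. norm (A (x n))) \<le> \<epsilon> * norm A"
        by blast
      then show ?thesis
        using \<open>0 \<le> \<epsilon>\<close> by (intro bj_eps_orth_of_norming_seq) (simp_all add: convergent_LIMSEQ_iff)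
    next
      assume ?b
      then show ?thesis
        using b_iff bj_eps_orth_of_approx_bj_orth_seq by meson
    qed
  qed
qed

end
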